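(* Assume $\Phi_h=M_h=\mathbb{P}_1$. Then any solution $(\phi^{n+1},\mu^{n+1})\in\Phi_h\times M_h$ of the G$_\varepsilon$-scheme satisfies $$\int_\Omega\big(I_h(\phi^{n+1}_-)\big)^2d\boldsymbol x\le C\,\frac{\varepsilon(1-\varepsilon)}{\eta^2}\le C\,\frac{\varepsilon}{\eta^2}\quad\text{and}\quad\int_\Omega\Big(I_h\big((\phi^{n+1}-1)_+\big)\Big)^2d\boldsymbol x\le C\,\frac{\varepsilon(1-\varepsilon)}{\eta^2}\le C\,\frac{\varepsilon}{\eta^2},$$ where $C$ depends on the initial energy $E(\phi^0)$ and on $\int_\Omega I_h(G_\varepsilon(\phi^0))\,d\boldsymbol x$.
   Context: $\Omega\subset\mathbb{R}^d$ ($d=1,2,3$) bounded, $\eta>0$, $\varepsilon\in(0,1/2)$. $f_-=\min\{f,0\}$ and $f_+=\max\{f,0\}$. $F(\phi)=\frac1{4\eta^2}\phi^2(\phi-1)^2=F_c+F_e$ with $F_c(\phi)=\frac1{4\eta^2}(\phi^4-2\phi^3+\frac32\phi^2)$, $F_e(\phi)=-\frac1{8\eta^2}\phi^2$; $E(\phi)=\int_\Omega(\frac12|\nabla\phi|^2+F(\phi))d\boldsymbol x$. The time interval $[0,T]$ is split into $N$ steps of size $\Delta t=T/N$, $n=0,\dots,N-1$. $\mathcal T_h$ is a structured triangulation of $\Omega$ in which every element $I$ has vertices $\boldsymbol x_0,\dots,\boldsymbol x_d$ with $\boldsymbol x_k-\boldsymbol x_0$ parallel to the $k$-th coordinate axis;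 $\Phi_h=M_h$ is the space of continuous piecewise $\mathbb{P}_1$ functions. $I_h$ is nodal $\mathbb{P}_1$ interpolation, $(f,g)_h=\int_\Omega I_h(fg)\,d\boldsymbol x$, $(\cdot,\cdot)$ the $L^2$ product. $G(\phi)=\phi\ln\phi+(1-\phi)\ln(1-\phi)+1$; $G_\varepsilon\in C^2(\mathbb{R})$ equals $G$ on $[\varepsilon,1-\varepsilon]$ and its second-order Taylor polynomial at $\varepsilon$ (resp. $1-\varepsilon$) for $\phi<\varepsilon$ (resp. $\phi>1-\varepsilon$), so $G_\varepsilon''=1/M_\varepsilon$ with $M_\varepsilon(\phi)=\phi(1-\phi)$ truncated to $\varepsilon(1-\varepsilon)$ outside $[\varepsilon,1-\varepsilon]$. For $\phi\in\Phi_h$, $M^G_\varepsilon(\phi)$ is the piecewise constant diagonal matrix with $k$-th entry on $I$ equal to $\frac{\phi(\boldsymbol x_k)-\phi(\boldsymbol x_0)}{G_\varepsilon'(\phi(\boldsymbol x_k))-G_\varepsilon'(\phi(\boldsymbol x_0))}$ if $\phi(\boldsymbol x_k)\ne\phi(\boldsymbol x_0)$, and $1/G_\varepsilon''(\phi(\boldsymbol x_0))$ otherwise. G$_\varepsilon$-scheme: given $\phi^n\in\Phi_h$ (starting from $\phi^0\in\Phi_h$), find $(\phi^{n+1},\mu^{n+1})\in\Phi_h\times M_h$ such that for all $(\bar\phi,\bar\mu)\in\Phi_h\times M_h$: $\frac1{\Delta t}(\phi^{n+1}-\phi^n,\bar\mu)_h+(M^G_\varepsilon(\phi^{n+1})\nabla\mu^{n+1},\nabla\bar\mu)=0$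 and $(\nabla\phi^{n+1},\nabla\bar\phi)+(I_h(F_c'(\phi^{n+1}))+I_h(F_e'(\phi^n)),\bar\phi)_h=(\mu^{n+1},\bar\phi)_h$. *)

theory Defs
  imports "HOL-Analysis.Analysis"
begin

(* An element is a pair (x0, xs): vertex x0 and, for each coordinate axis k,
   a vertex xs k with  X (xs k) - X x0  parallel to the k-th axis.
   A P1 function (element of Phi_h = M_h) is given by its nodal values
   u :: nat => real.
   --------------------------------------------------------------------- *)

type_synonym 'd elem = "nat \<times> ('d \<Rightarrow> nat)"

definition verts :: "'d elem \<Rightarrow> nat set" where
  "verts e = insert (fst e) (range (snd e))"

definition edge_len :: "(nat \<Rightarrow> real^'d) \<Rightarrow> 'd elem \<Rightarrow> 'd \<Rightarrow> real" where
  "edge_len X e k = (X (snd e k) - X (fst e)) $ k"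

definition elem_set :: "(nat \<Rightarrow> real^'d) \<Rightarrow> 'd elem \<Rightarrow> (real^'d) set" where
  "elem_set X e = convex hull (X ` verts e)"

definition structured_elem :: "(nat \<Rightarrow> real^'d) \<Rightarrow> 'd elem \<Rightarrow> bool" where
  "structured_elem X e \<longleftrightarrow>
     (\<forall>k. edge_len X e k \<noteq> 0 \<and> X (snd e k) - X (fst e) = axis k (edge_len X e k))"

text \<open>Conforming structured triangulation of the (bounded, connected) domain
  Omega = union of the elements, with node set Nd and element set Th.\<close>
definition structured_mesh ::
  "(nat \<Rightarrow> real^'d) \<Rightarrow> nat set \<Rightarrow> 'd elem set \<Rightarrow> bool" where
  "structured_mesh X Nd Th \<longleftrightarrow>
     finite Th \<and> Th \<noteq> {} \<and>
     Nd = (\<Union>e\<in>Th. verts e) \<and> inj_on X Nd \<and>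
     (\<forall>e\<in>Th. structured_elem X e) \<and>
     (\<forall>e\<in>Th. \<forall>e'\<in>Th. e \<noteq> e' \<longrightarrow>
         interior (elem_set X e) \<inter> interior (elem_set X e') = {}) \<and>
     (\<forall>e\<in>Th. \<forall>e'\<in>Th.
         elem_set X e \<inter> elem_set X e' = convex hull (X ` (verts e \<inter> verts e'))) \<and>
     connected (\<Union>e\<in>Th. elem_set X e)"

text \<open>The P1 (nodal) interpolant of nodal values u, restricted to element e
  (written in the barycentric coordinates of the structured element).\<close>
definition P1 :: "(nat \<Rightarrow> real^'d) \<Rightarrow> 'd elem \<Rightarrow> (nat \<Rightarrow> real) \<Rightarrow> real^'d \<Rightarrow> real" where
  "P1 X e u y = u (fst e) +
     (\<Sum>k\<in>UNIV. (u (snd e k) - u (fst e)) * ((y - X (fst e)) $ k) / edge_len X e k)"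

definition grad :: "(nat \<Rightarrow> real^'d) \<Rightarrow> 'd elem \<Rightarrow> (nat \<Rightarrow> real) \<Rightarrow> real^'d" where
  "grad X e u = (\<chi> k. (u (snd e k) - u (fst e)) / edge_len X e k)"

definition int_h :: "(nat \<Rightarrow> real^'d) \<Rightarrow> 'd elem set \<Rightarrow> (nat \<Rightarrow> real) \<Rightarrow> real" where
  "int_h X Th w = (\<Sum>e\<in>Th. integral (elem_set X e) (P1 X e w))"

text \<open>Mass-lumped product (f,g)_h = int_Omega I_h(f g) dx.\<close>
definition ip_h :: "(nat \<Rightarrow> real^'d) \<Rightarrow> 'd elem set \<Rightarrow> (nat \<Rightarrow> real) \<Rightarrow> (nat \<Rightarrow> real) \<Rightarrow> real" where
  "ip_h X Th f g = int_h X Th (\<lambda>v. f v * g v)"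

definition grad_ip :: "(nat \<Rightarrow> real^'d) \<Rightarrow> 'd elem set \<Rightarrow> (nat \<Rightarrow> real) \<Rightarrow> (nat \<Rightarrow> real) \<Rightarrow> real" where
  "grad_ip X Th u v = (\<Sum>e\<in>Th. integral (elem_set X e) (\<lambda>y. grad X e u \<bullet> grad X e v))"

definition Fdw :: "real \<Rightarrow> real \<Rightarrow> real" where
  "Fdw \<eta> p = 1 / (4 * \<eta>^2) * p^2 * (p - 1)^2"

definition Fc :: "real \<Rightarrow> real \<Rightarrow> real" where
  "Fc \<eta> p = 1 / (4 * \<eta>^2) * (p^4 - 2 * p^3 + 3/2 * p^2)"

definition Fe :: "real \<Rightarrow> real \<Rightarrow> real" where
  "Fe \<eta> p = - 1 / (8 * \<eta>^2) * p^2"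

definition dFc :: "real \<Rightarrow> real \<Rightarrow> real" where
  "dFc \<eta> p = 1 / (4 * \<eta>^2) * (4 * p^3 - 6 * p^2 + 3 * p)"

definition dFe :: "real \<Rightarrow> real \<Rightarrow> real" where
  "dFe \<eta> p = - 1 / (4 * \<eta>^2) * p"

definition energy :: "(nat \<Rightarrow> real^'d) \<Rightarrow> 'd elem set \<Rightarrow> real \<Rightarrow> (nat \<Rightarrow> real) \<Rightarrow> real" where
  "energy X Th \<eta> \<phi> =
     (\<Sum>e\<in>Th. integral (elem_set X e)
        (\<lambda>y. 1/2 * (norm (grad X e \<phi>))^2 + Fdw \<eta> (P1 X e \<phi> y)))"

definition G :: "real \<Rightarrow> real" where
  "G p = p * ln p + (1 - p) * ln (1 - p) + 1"

definition dG :: "real \<Rightarrow> real" where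
  "dG p = ln p - ln (1 - p)"

definition ddG :: "real \<Rightarrow> real" where
  "ddG p = 1 / (p * (1 - p))"

definition Geps :: "real \<Rightarrow> real \<Rightarrow> real" where
  "Geps \<epsilon> p =
     (if p < \<epsilon> then G \<epsilon> + dG \<epsilon> * (p - \<epsilon>) + ddG \<epsilon> / 2 * (p - \<epsilon>)^2
      else if p > 1 - \<epsilon> then
        G (1 - \<epsilon>) + dG (1 - \<epsilon>) * (p - (1 - \<epsilon>)) + ddG (1 - \<epsilon>) / 2 * (p - (1 - \<epsilon>))^2
      else G p)"

definition dGeps :: "real \<Rightarrow> real \<Rightarrow> real" where
  "dGeps \<epsilon> p =
     (if p < \<epsilon> then dG \<epsilon> + ddG \<epsilon> * (p - \<epsilon>)
      else if p > 1 - \<epsilon> then dG (1 - \<epsilon>) + ddG (1 - \<epsilon>) * (p - (1 - \<epsilon>))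
      else dG p)"

definition Meps :: "real \<Rightarrow> real \<Rightarrow> real" where
  "Meps \<epsilon> p = (if p < \<epsilon> \<or> p > 1 - \<epsilon> then \<epsilon> * (1 - \<epsilon>) else p * (1 - p))"

definition ddGeps :: "real \<Rightarrow> real \<Rightarrow> real" where
  "ddGeps \<epsilon> p = 1 / Meps \<epsilon> p"

text \<open>k-th diagonal entry of M^G_eps(phi) on element e.\<close>
definition MG :: "real \<Rightarrow> 'd elem \<Rightarrow> (nat \<Rightarrow> real) \<Rightarrow> 'd \<Rightarrow> real" where
  "MG \<epsilon> e \<phi> k =
     (let a = \<phi> (fst e); b = \<phi> (snd e k) in
      if b \<noteq> a then (b - a) / (dGeps \<epsilon> b - dGeps \<epsilon> a) else 1 / ddGeps \<epsilon> a)"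

definition mob_ip :: "(nat \<Rightarrow> real^'d) \<Rightarrow> 'd elem set \<Rightarrow> real \<Rightarrow> (nat \<Rightarrow> real)
    \<Rightarrow> (nat \<Rightarrow> real) \<Rightarrow> (nat \<Rightarrow> real) \<Rightarrow> real" where
  "mob_ip X Th \<epsilon> \<phi> \<mu> \<psi> =
     (\<Sum>e\<in>Th. integral (elem_set X e)
        (\<lambda>y. \<Sum>k\<in>UNIV. MG \<epsilon> e \<phi> k * (grad X e \<mu>) $ k * (grad X e \<psi>) $ k))"

definition Geps_scheme :: "(nat \<Rightarrow> real^'d) \<Rightarrow> 'd elem set \<Rightarrow> real \<Rightarrow> real \<Rightarrow> real
    \<Rightarrow> nat \<Rightarrow> (nat \<Rightarrow> nat \<Rightarrow> real) \<Rightarrow> (nat \<Rightarrow> nat \<Rightarrow> real) \<Rightarrow> bool" where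
  "Geps_scheme X Th \<eta> \<epsilon> dt N \<phi> \<mu> \<longleftrightarrow>
     (\<forall>m<N. \<forall>\<psi>::nat \<Rightarrow> real.
        1 / dt * ip_h X Th (\<lambda>v. \<phi> (Suc m) v - \<phi> m v) \<psi>
          + mob_ip X Th \<epsilon> (\<phi> (Suc m)) (\<mu> (Suc m)) \<psi> = 0
      \<and> grad_ip X Th (\<phi> (Suc m)) \<psi>
          + ip_h X Th (\<lambda>v. dFc \<eta> (\<phi> (Suc m) v) + dFe \<eta> (\<phi> m v)) \<psi>
          = ip_h X Th (\<mu> (Suc m)) \<psi>)"

end

theory Submission
  imports Defs
begin

(*
  Testing the first equation of the scheme with mu^(n+1) and the second with phi^(n+1) - phi^n
  shows that the lumped energy 1/2 |grad phi|^2 + int I_h F(phi) does not increase, thanks to the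
  convex-concave splitting of F. Testing the first equation with I_h G_eps'(phi^(n+1)) instead
  (the mobility M^G_eps is built so that M^G_eps(phi) grad I_h G_eps'(phi) = grad phi on every
  structured element) and the second with mu^(n+1) - I_h(F_c'(phi^(n+1)) + F_e'(phi^n)) shows
  that int I_h G_eps(phi) grows by at most dt/(2 eta^2) times that energy per step. The initial
  lumped energy is bounded in terms of E(phi^0) and |Omega|, and |Omega| is at most
  int I_h G_eps(phi^0) / (1 - ln 2) because G_eps >= G(1/2) = 1 - ln 2. Finally, below 0 and
  above 1 the quadratic extension gives G_eps(p) >= (p_-)^2 / (2 eps (1 - eps)), and Jensen's
  inequality for the nodal interpolant turns this into the L^2 bounds.
*)

section \<open>Nodal interpolation on structured elements\<close>

lemma integrable_on_compact_continuous:
  fixes f :: "'a::euclidean_space \<Rightarrow> real"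
  assumes "compact S" "continuous_on S f"
  shows "f integrable_on S"
proof -
  have "integrable lborel (\<lambda>x. indicator S x *\<^sub>R f x)"
    by (rule borel_integrable_compact[OF assms])
  then have "(\<lambda>x. indicator S x *\<^sub>R f x) integrable_on UNIV"
    using integrable_completion integrable_on_lebesgue by blast
  moreover have "(\<lambda>x. indicator S x *\<^sub>R f x) = (\<lambda>x. if x \<in> S then f x else 0)"
    by (auto simp: indicator_def)
  ultimately show ?thesis
    using integrable_restrict_UNIV by metis
qed

lemma finite_verts: "finite (verts (e :: 'd::finite elem))"
  by (simp add: verts_def)

lemma compact_elem_set: "compact (elem_set X (e :: 'd::finite elem))"
  unfolding elem_set_def by (intro compact_convex_hull finite_imp_compact finite_imageI finite_verts)

lemma convex_elem_set: "convex (elem_set X e)"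
  unfolding elem_set_def by simp

definition elem_vol :: "(nat \<Rightarrow> real^'d) \<Rightarrow> 'd elem \<Rightarrow> real" where
  "elem_vol X e = measure lebesgue (elem_set X e)"

lemma integral_const_elem_set:
  "integral (elem_set X e) (\<lambda>_. c) = c * elem_vol X (e :: 'd::finite elem)"
  using lmeasure_integral[OF lmeasurable_compact[OF compact_elem_set], of X e]
    integral_mult_right[of "elem_set X e" c "\<lambda>_. 1"]
  by (simp add: elem_vol_def)

lemma continuous_on_P1: "continuous_on S (P1 X e w)"
proof -
  have "P1 X e w = (\<lambda>y. w (fst e) +
      (\<Sum>k\<in>UNIV. ((w (snd e k) - w (fst e)) / edge_len X e k) * ((y - X (fst e)) $ k)))"
    by (auto simp: P1_def fun_eq_iff)
  then show ?thesis
    by (simp only:) (intro continuous_intros)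
qed

lemma integrable_P1_comp:
  fixes g :: "real \<Rightarrow> real"
  assumes "continuous_on UNIV g"
  shows "(\<lambda>y. g (P1 X e w y)) integrable_on elem_set X (e :: 'd::finite elem)"
  using continuous_on_compose2[OF assms continuous_on_P1[of "elem_set X e" X e w]]
  by (intro integrable_on_compact_continuous compact_elem_set) auto

lemma integrable_P1: "P1 X e w integrable_on elem_set X (e :: 'd::finite elem)"
  using integrable_P1_comp[of "\<lambda>x. x"] by simp

text \<open>\<open>bary X e y k\<close> is the barycentric coordinate of \<open>y\<close> belonging to the vertex \<open>snd e k\<close>;
  the one belonging to \<open>fst e\<close> is \<open>1 - (\<Sum>k. bary X e y k)\<close>.\<close>
definition bary :: "(nat \<Rightarrow> real^'d) \<Rightarrow> 'd elem \<Rightarrow> real^'d \<Rightarrow> 'd \<Rightarrow> real" where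
  "bary X e y k = (y - X (fst e)) $ k / edge_len X e k"

lemma P1_eq_bary:
  "P1 X e w y = (1 - (\<Sum>k\<in>UNIV. bary X e y k)) * w (fst e) + (\<Sum>k\<in>UNIV. bary X e y k * w (snd e k))"
proof -
  have "P1 X e w y = w (fst e) + (\<Sum>k\<in>UNIV. bary X e y k * w (snd e k) - bary X e y k * w (fst e))"
    unfolding P1_def bary_def
    by (intro arg_cong2[where f = "(+)"] refl sum.cong) (simp add: divide_inverse algebra_simps)
  then show ?thesis
    by (simp add: sum_subtractf sum_distrib_left algebra_simps)
qed

lemma bary_base: "bary X e (X (fst e)) k = 0"
  by (simp add: bary_def)

lemma bary_vertex:
  assumes "structured_elem X e"
  shows "bary X e (X (snd e j)) k = (if k = j then 1 else 0)"
proof -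
  have "X (snd e j) - X (fst e) = axis j (edge_len X e j)" "edge_len X e k \<noteq> 0" "edge_len X e j \<noteq> 0"
    using assms by (auto simp: structured_elem_def)
  then show ?thesis
    by (simp add: bary_def axis_def)
qed

lemma bary_affine:
  "bary X e ((1 - t) *\<^sub>R a + t *\<^sub>R b) k = (1 - t) * bary X e a k + t * bary X e b k"
  unfolding bary_def by (simp add: algebra_simps add_divide_distrib diff_divide_distrib)

lemma bary_sum_affine:
  "(\<Sum>k\<in>UNIV. bary X e ((1 - t) *\<^sub>R a + t *\<^sub>R b) k * c k)
     = (1 - t) * (\<Sum>k\<in>UNIV. bary X e a k * c k) + t * (\<Sum>k\<in>UNIV. bary X e b k * c k)"
  unfolding bary_affine by (simp add: sum.distrib sum_distrib_left distrib_right mult.assoc)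

lemma bary_in_elem_set:
  assumes "structured_elem X e" "y \<in> elem_set X e"
  shows "(\<forall>k. 0 \<le> bary X e y k) \<and> (\<Sum>k\<in>UNIV. bary X e y k) \<le> 1"
proof -
  let ?H = "{y. (\<forall>k. 0 \<le> bary X e y k) \<and> (\<Sum>k\<in>UNIV. bary X e y k) \<le> 1}"
  have H_convex: "convex ?H"
  proof (rule convexI)
    fix a b and u v :: real
    assume a: "a \<in> ?H" and b: "b \<in> ?H" and uv: "0 \<le> u" "0 \<le> v" "u + v = 1"
    then have u: "u = 1 - v"
      by simp
    have "(\<Sum>k\<in>UNIV. bary X e (u *\<^sub>R a + v *\<^sub>R b) k)
        = u * (\<Sum>k\<in>UNIV. bary X e a k) + v * (\<Sum>k\<in>UNIV. bary X e b k)"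
      unfolding u bary_affine by (simp add: sum.distrib sum_distrib_left)
    also have "\<dots> \<le> u * 1 + v * 1"
      using a b uv by (intro add_mono mult_left_mono) auto
    finally show "u *\<^sub>R a + v *\<^sub>R b \<in> ?H"
      using a b uv by (auto simp: u bary_affine)
  qed
  have "X ` verts e \<subseteq> ?H"
    using bary_vertex[OF assms(1)] by (auto simp: verts_def bary_base sum.delta)
  then have "elem_set X e \<subseteq> ?H"
    unfolding elem_set_def using H_convex by (rule hull_minimal)
  then show ?thesis
    using assms by auto
qed

lemma P1_const: "P1 X e (\<lambda>_. c) y = c"
  by (simp add: P1_def)

lemma P1_diff: "P1 X e (\<lambda>v. a v - b v) y = P1 X e a y - P1 X e b y"
  unfolding P1_eq_bary by (simp add: sum_subtractf algebra_simps)

lemma P1_cmult: "P1 X e (\<lambda>v. c * a v) y = c * P1 X e a y"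
  by (simp add: P1_def sum_distrib_left algebra_simps)

lemma P1_vertex:
  assumes "structured_elem X e" "v \<in> verts e"
  shows "P1 X e w (X v) = w v"
proof (cases "v = fst e")
  case True
  then show ?thesis
    by (simp add: P1_eq_bary bary_base)
next
  case False
  then obtain j where j: "v = snd e j"
    using assms(2) by (auto simp: verts_def)
  have "(\<Sum>k\<in>UNIV. (if k = j then 1 else 0) * w (snd e k)) = w (snd e j)"
    by (simp add: if_distrib[of "\<lambda>x. x * _"] sum.delta cong: if_cong)
  then show ?thesis
    unfolding P1_eq_bary j bary_vertex[OF assms(1)] by simp
qed

lemma P1_affine: "P1 X e w ((1 - t) *\<^sub>R a + t *\<^sub>R b) = (1 - t) * P1 X e w a + t * P1 X e w b"
proof -
  have s: "(\<Sum>k\<in>UNIV. bary X e ((1 - t) *\<^sub>R a + t *\<^sub>R b) k)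
      = (1 - t) * (\<Sum>k\<in>UNIV. bary X e a k) + t * (\<Sum>k\<in>UNIV. bary X e b k)"
    unfolding bary_affine by (simp add: sum.distrib sum_distrib_left)
  show ?thesis
    unfolding P1_eq_bary bary_sum_affine s by (simp add: algebra_simps)
qed

lemma P1_mono:
  assumes "structured_elem X e" "y \<in> elem_set X e" "\<And>v. v \<in> verts e \<Longrightarrow> a v \<le> b v"
  shows "P1 X e a y \<le> P1 X e b y"
proof -
  have "a (fst e) \<le> b (fst e)" "\<And>k. a (snd e k) \<le> b (snd e k)"
    using assms(3) by (auto simp: verts_def)
  then show ?thesis
    using bary_in_elem_set[OF assms(1,2)] unfolding P1_eq_bary
    by (intro add_mono mult_left_mono sum_mono) auto
qed

lemma P1_abs_le:
  assumes "structured_elem X e" "y \<in> elem_set X e" "\<And>v. v \<in> verts e \<Longrightarrow> \<bar>w v\<bar> \<le> M"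
  shows "\<bar>P1 X e w y\<bar> \<le> M"
  using P1_mono[OF assms(1,2), of w "\<lambda>_. M"] P1_mono[OF assms(1,2), of "\<lambda>_. - M" w] assms(3)
  by (force simp: P1_const abs_le_iff)

text \<open>Jensen's inequality for the convex function \<open>t\<^sup>2\<close>, with the barycentric coordinates as weights.\<close>
lemma P1_square_le:
  assumes "structured_elem X e" "y \<in> elem_set X e"
  shows "(P1 X e w y)^2 \<le> P1 X e (\<lambda>v. (w v)^2) y"
proof -
  define m where "m = P1 X e w y"
  define s where "s = (\<Sum>k\<in>UNIV. bary X e y k)"
  have m: "(\<Sum>k\<in>UNIV. bary X e y k * w (snd e k)) = m - (1 - s) * w (fst e)"
    unfolding m_def s_def P1_eq_bary by simp
  have "(1 - s) * (w (fst e) - m)^2 + (\<Sum>k\<in>UNIV. bary X e y k * (w (snd e k) - m)^2)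
      = (1 - s) * (w (fst e))^2 - 2 * m * ((1 - s) * w (fst e)) + (1 - s) * m^2
        + ((\<Sum>k\<in>UNIV. bary X e y k * (w (snd e k))^2)
           - 2 * m * (\<Sum>k\<in>UNIV. bary X e y k * w (snd e k)) + m^2 * s)"
    unfolding s_def
    by (simp add: power2_eq_square algebra_simps sum.distrib sum_subtractf sum_distrib_left)
  also have "\<dots> = P1 X e (\<lambda>v. (w v)^2) y - m^2"
    unfolding P1_eq_bary s_def[symmetric] m by (simp add: power2_eq_square algebra_simps)
  finally have "P1 X e (\<lambda>v. (w v)^2) y - m^2
      = (1 - s) * (w (fst e) - m)^2 + (\<Sum>k\<in>UNIV. bary X e y k * (w (snd e k) - m)^2)"
    by simp
  also have "\<dots> \<ge> 0"
    using bary_in_elem_set[OF assms] unfolding s_def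
    by (intro add_nonneg_nonneg sum_nonneg mult_nonneg_nonneg) auto
  finally show ?thesis
    by (simp add: m_def)
qed

section \<open>Mass lumping and the discrete bilinear forms\<close>

lemma int_h_diff: "int_h X Th (\<lambda>v. a v - b v) = int_h X Th a - int_h X Th (b :: nat \<Rightarrow> real)"
  unfolding int_h_def P1_diff by (simp add: integral_diff integrable_P1 sum_subtractf)

lemma int_h_cmult: "int_h X Th (\<lambda>v. c * a v) = c * int_h X Th a"
  unfolding int_h_def P1_cmult by (simp add: sum_distrib_left)

lemma int_h_const: "int_h X Th (\<lambda>_. c) = c * (\<Sum>e\<in>Th. elem_vol X e)"
  unfolding int_h_def P1_const by (simp add: integral_const_elem_set sum_distrib_left)

lemma int_h_mono:
  assumes "\<And>e. e \<in> Th \<Longrightarrow> structured_elem X e"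
    and "\<And>e v. e \<in> Th \<Longrightarrow> v \<in> verts e \<Longrightarrow> a v \<le> b v"
  shows "int_h X Th a \<le> int_h X Th b"
  unfolding int_h_def by (intro sum_mono integral_le integrable_P1 P1_mono assms) auto

lemma int_h_nonneg:
  assumes "\<And>e. e \<in> Th \<Longrightarrow> structured_elem X e" "\<And>v. 0 \<le> a v"
  shows "0 \<le> int_h X Th a"
  using int_h_mono[OF assms(1), where a = "\<lambda>_. 0" and b = a] assms(2) by (simp add: int_h_const)

lemma grad_add: "grad X e (\<lambda>v. a v + b v) = grad X e a + grad X e b"
  by (simp add: grad_def vec_eq_iff add_divide_distrib[symmetric] algebra_simps)

lemma grad_diff: "grad X e (\<lambda>v. a v - b v) = grad X e a - grad X e b"
  by (simp add: grad_def vec_eq_iff diff_divide_distrib)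

lemma grad_cmult: "grad X e (\<lambda>v. c * a v) = c *\<^sub>R grad X e a"
  by (simp add: grad_def vec_eq_iff algebra_simps)

lemma grad_ip_eq_sum: "grad_ip X Th u v = (\<Sum>e\<in>Th. elem_vol X e * (grad X e u \<bullet> grad X e v))"
  unfolding grad_ip_def integral_const_elem_set by (simp add: mult.commute)

lemma mob_ip_eq_sum:
  "mob_ip X Th \<epsilon> \<phi> \<mu> \<psi>
     = (\<Sum>e\<in>Th. elem_vol X e * (\<Sum>k\<in>UNIV. MG \<epsilon> e \<phi> k * grad X e \<mu> $ k * grad X e \<psi> $ k))"
  unfolding mob_ip_def integral_const_elem_set by (simp add: mult.commute)

lemma grad_ip_commute: "grad_ip X Th u v = grad_ip X Th v u"
  unfolding grad_ip_eq_sum by (simp add: inner_commute)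

lemma grad_ip_add_left: "grad_ip X Th (\<lambda>v. a v + b v) w = grad_ip X Th a w + grad_ip X Th b w"
  unfolding grad_ip_eq_sum grad_add by (simp add: inner_add_left algebra_simps sum.distrib)

lemma grad_ip_diff_left: "grad_ip X Th (\<lambda>v. a v - b v) w = grad_ip X Th a w - grad_ip X Th b w"
  unfolding grad_ip_eq_sum grad_diff by (simp add: inner_diff_left algebra_simps sum_subtractf)

lemma grad_ip_cmult_left: "grad_ip X Th (\<lambda>v. c * a v) w = c * grad_ip X Th a w"
  unfolding grad_ip_eq_sum grad_cmult by (simp add: algebra_simps sum_distrib_left)

lemma grad_ip_self_nonneg: "0 \<le> grad_ip X Th u u"
  unfolding grad_ip_eq_sum by (intro sum_nonneg mult_nonneg_nonneg) (simp_all add: elem_vol_def)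

lemma grad_ip_le_half_sum: "grad_ip X Th y x \<le> 1/2 * (grad_ip X Th x x + grad_ip X Th y y)"
proof -
  let ?d = "\<lambda>v. x v - y v"
  have "grad_ip X Th ?d ?d = grad_ip X Th ?d x - grad_ip X Th ?d y"
    by (subst (1 2 3) grad_ip_commute) (rule grad_ip_diff_left)
  also have "\<dots> = grad_ip X Th x x + grad_ip X Th y y - 2 * grad_ip X Th y x"
    unfolding grad_ip_diff_left using grad_ip_commute[of X Th x y] by simp
  finally show ?thesis
    using grad_ip_self_nonneg[of X Th ?d] by simp
qed

lemma grad_ip_diff_right_ge:
  "1/2 * grad_ip X Th x x - 1/2 * grad_ip X Th y y \<le> grad_ip X Th x (\<lambda>v. x v - y v)"
proof -
  have "grad_ip X Th x (\<lambda>v. x v - y v) = grad_ip X Th x x - grad_ip X Th y x"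
    by (subst grad_ip_commute) (rule grad_ip_diff_left)
  then show ?thesis
    using grad_ip_le_half_sum[of X Th y x] by simp
qed

text \<open>On a structured element the \<open>k\<close>-th component of the gradient is the difference quotient
  along the single edge in direction \<open>k\<close>, so every term of the inner product is a product of two
  increments of the same sign.\<close>
lemma grad_ip_mono_comp_nonneg:
  assumes "mono g"
  shows "0 \<le> grad_ip X Th (\<lambda>v. g (x v)) x"
  unfolding grad_ip_eq_sum
proof (intro sum_nonneg mult_nonneg_nonneg)
  fix e
  have incr: "0 \<le> (g b - g a) * (b - a)" for a b
    using assms by (cases "a \<le> b") (auto simp: mono_def mult_nonpos_nonpos)
  have "grad X e (\<lambda>v. g (x v)) \<bullet> grad X e x
      = (\<Sum>k\<in>UNIV. (g (x (snd e k)) - g (x (fst e))) * (x (snd e k) - x (fst e)) / (edge_len X e k)^2)"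
    unfolding grad_def inner_vec_def by (simp add: power2_eq_square)
  also have "\<dots> \<ge> 0"
    using incr by (intro sum_nonneg divide_nonneg_nonneg) auto
  finally show "0 \<le> grad X e (\<lambda>v. g (x v)) \<bullet> grad X e x" .
qed (simp add: elem_vol_def)

section \<open>The potentials\<close>

lemma one_minus_ln2_pos: "0 < 1 - ln (2::real)"
  using ln_2_less_1 by simp

lemma dG_strict_mono:
  assumes "0 < a" "a < b" "b < 1"
  shows "dG a < dG b"
  using assms by (simp add: dG_def diff_strict_mono)

lemma dG_mono: "0 < a \<Longrightarrow> a \<le> b \<Longrightarrow> b < 1 \<Longrightarrow> dG a \<le> dG b"
  using dG_strict_mono[of a b] by (cases "a = b") auto

lemma ddG_pos: "0 < p \<Longrightarrow> p < 1 \<Longrightarrow> 0 < ddG p"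
  unfolding ddG_def by simp

lemma DERIV_G:
  assumes "0 < p" "p < 1"
  shows "(G has_real_derivative dG p) (at p)"
proof -
  have "((\<lambda>p. p * ln p + (1 - p) * ln (1 - p) + 1) has_real_derivative
      1 * ln p + p * (1 / p) + ((- 1) * ln (1 - p) + (1 - p) * (- 1 / (1 - p))) + 0) (at p)"
    using assms by (intro derivative_eq_intros) auto
  moreover have "1 * ln p + p * (1 / p) + ((- 1) * ln (1 - p) + (1 - p) * (- 1 / (1 - p))) + 0 = dG p"
    using assms unfolding dG_def by simp
  ultimately show ?thesis
    unfolding G_def[abs_def] by simp
qed

lemma G_reflect: "G (1 - p) = G p"
  by (simp add: G_def algebra_simps)

lemma dG_reflect: "dG (1 - p) = - dG p"
  by (simp add: dG_def)

lemma ddG_reflect: "ddG (1 - p) = ddG p"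
  by (simp add: ddG_def mult.commute)

lemma Geps_reflect:
  assumes "\<epsilon> < 1/2"
  shows "Geps \<epsilon> (1 - p) = Geps \<epsilon> p"
proof -
  have "(1 - p - \<epsilon>)^2 = (p - (1 - \<epsilon>))^2" "(1 - p - (1 - \<epsilon>))^2 = (p - \<epsilon>)^2"
    by (simp_all add: power2_eq_square algebra_simps)
  then show ?thesis
    unfolding Geps_def G_reflect[of \<epsilon>, symmetric] dG_reflect[of \<epsilon>] ddG_reflect[of \<epsilon>]
    using assms by (simp add: G_reflect dG_reflect ddG_reflect algebra_simps)
qed

lemma dGeps_strict_mono:
  assumes e: "0 < \<epsilon>" "\<epsilon> < 1/2" and ab: "a < b"
  shows "dGeps \<epsilon> a < dGeps \<epsilon> b"
proof -
  have dd: "ddG \<epsilon> > 0" "ddG (1 - \<epsilon>) > 0"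
    using e by (auto intro: ddG_pos)
  have m: "dG \<epsilon> \<le> dG (1 - \<epsilon>)"
    using e by (intro dG_mono) auto
  have mid: "dG \<epsilon> \<le> dG p" "dG p \<le> dG (1 - \<epsilon>)" if "\<epsilon> \<le> p" "p \<le> 1 - \<epsilon>" for p
    using that e by (auto intro: dG_mono)
  have st: "dG a < dG b" if "\<epsilon> \<le> a" "b \<le> 1 - \<epsilon>"
    using that e ab by (intro dG_strict_mono) auto
  have l1: "ddG \<epsilon> * (a - \<epsilon>) < 0" if "a < \<epsilon>"
    using that dd by (simp add: mult_pos_neg)
  have l2: "ddG \<epsilon> * (a - \<epsilon>) < ddG \<epsilon> * (b - \<epsilon>)"
    using ab dd by simp
  have r1: "ddG (1 - \<epsilon>) * (b - (1 - \<epsilon>)) > 0" if "b > 1 - \<epsilon>"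
    using that dd by simp
  have r2: "ddG (1 - \<epsilon>) * (a - (1 - \<epsilon>)) < ddG (1 - \<epsilon>) * (b - (1 - \<epsilon>))"
    using ab dd by simp
  show ?thesis
    unfolding dGeps_def using ab e m mid[of a] mid[of b] st l1 l2 r1 r2 by (auto simp: not_less)
qed

lemma dGeps_mono: "0 < \<epsilon> \<Longrightarrow> \<epsilon> < 1/2 \<Longrightarrow> a \<le> b \<Longrightarrow> dGeps \<epsilon> a \<le> dGeps \<epsilon> b"
  using dGeps_strict_mono[of \<epsilon> a b] by (cases "a = b") auto

lemma DERIV_if_less:
  fixes f g :: "real \<Rightarrow> real"
  assumes f: "x \<le> c \<Longrightarrow> (f has_real_derivative f' x) (at x)"
    and g: "c \<le> x \<Longrightarrow> (g has_real_derivative g' x) (at x)"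
    and fg: "f c = g c" and f'g': "f' c = g' c"
  shows "((\<lambda>x. if x < c then f x else g x) has_real_derivative (if x < c then f' x else g' x)) (at x)"
proof (cases x c rule: linorder_cases)
  case less
  have "((\<lambda>x. if x < c then f x else g x) has_real_derivative f' x) (at x)"
    by (rule has_field_derivative_transform_within_open[OF f, where S = "{..<c}"]) (use less in auto)
  then show ?thesis
    using less by simp
next
  case greater
  have "((\<lambda>x. if x < c then f x else g x) has_real_derivative g' x) (at x)"
    by (rule has_field_derivative_transform_within_open[OF g, where S = "{c<..}"]) (use greater in auto)
  then show ?thesis
    using greater by simp
next
  case equal
  define h where "h = (\<lambda>x. if x < c then f x else g x)"
  let ?q = "\<lambda>h y. (h y - h c) / (y - c)"
  have "(?q f \<longlongrightarrow> f' c) (at_left c)" "(?q g \<longlongrightarrow> g' c) (at_right c)"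
    using f g unfolding equal has_field_derivative_iff filterlim_at_split by auto
  moreover have "\<forall>\<^sub>F y in at_left c. ?q f y = ?q h y" "\<forall>\<^sub>F y in at_right c. ?q g y = ?q h y"
    using fg by (auto simp: h_def eventually_at_filter)
  ultimately have "(?q h \<longlongrightarrow> g' c) (at_left c)" "(?q h \<longlongrightarrow> g' c) (at_right c)"
    unfolding f'g' by (blast intro: Lim_transform_eventually)+
  then show ?thesis
    unfolding equal has_field_derivative_iff filterlim_at_split h_def by simp
qed

lemma DERIV_Geps:
  assumes "0 < \<epsilon>" "\<epsilon> < 1/2"
  shows "(Geps \<epsilon> has_real_derivative dGeps \<epsilon> p) (at p)"
proof -
  let ?Q = "\<lambda>c p. G c + dG c * (p - c) + ddG c / 2 * (p - c)^2"
  let ?Q' = "\<lambda>c p. dG c + ddG c * (p - c)"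
  have DERIV_Q: "(?Q c has_real_derivative ?Q' c x) (at x)" for c x
    by (auto intro!: derivative_eq_intros simp: power2_eq_square algebra_simps)
  have Geps: "Geps \<epsilon> = (\<lambda>p. if p < \<epsilon> then ?Q \<epsilon> p else if p < 1 - \<epsilon> then G p else ?Q (1 - \<epsilon>) p)"
    by (auto simp: Geps_def fun_eq_iff)
  have dGeps: "dGeps \<epsilon> p = (if p < \<epsilon> then ?Q' \<epsilon> p else if p < 1 - \<epsilon> then dG p else ?Q' (1 - \<epsilon>) p)"
    by (auto simp: dGeps_def)
  have inner: "((\<lambda>p. if p < 1 - \<epsilon> then G p else ?Q (1 - \<epsilon>) p) has_real_derivative
      (if x < 1 - \<epsilon> then dG x else ?Q' (1 - \<epsilon>) x)) (at x)" if "\<epsilon> \<le> x" for x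
  proof (rule DERIV_if_less)
    show "(G has_real_derivative dG x) (at x)" if "x \<le> 1 - \<epsilon>"
      using assms that \<open>\<epsilon> \<le> x\<close> by (intro DERIV_G) auto
  qed (rule DERIV_Q | simp)+
  show ?thesis
    unfolding Geps dGeps by (rule DERIV_if_less) (rule DERIV_Q inner | use assms in simp)+
qed

lemma convex_on_Geps:
  assumes "0 < \<epsilon>" "\<epsilon> < 1/2"
  shows "convex_on UNIV (Geps \<epsilon>)"
  using assms by (intro convex_on_realI[where f' = "dGeps \<epsilon>"] DERIV_Geps dGeps_mono) auto

lemma Geps_diff_le:
  assumes "0 < \<epsilon>" "\<epsilon> < 1/2"
  shows "Geps \<epsilon> b - Geps \<epsilon> a \<le> dGeps \<epsilon> b * (b - a)"
proof -
  have "dGeps \<epsilon> b * (a - b) \<le> Geps \<epsilon> a - Geps \<epsilon> b"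
    by (rule convex_on_imp_above_tangent[OF convex_on_Geps[OF assms] connected_UNIV])
      (simp_all add: DERIV_Geps[OF assms])
  then show ?thesis
    by (simp add: algebra_simps)
qed

text \<open>\<open>G\<^sub>\<epsilon>\<close> is convex with minimum at \<open>1/2\<close>, where it equals \<open>G (1/2) = 1 - ln 2\<close>.\<close>
lemma Geps_ge:
  assumes "0 < \<epsilon>" "\<epsilon> < 1/2"
  shows "1 - ln 2 \<le> Geps \<epsilon> p"
proof -
  have "Geps \<epsilon> (1/2) = 1 - ln 2" "dGeps \<epsilon> (1/2) = 0"
    using assms by (simp_all add: Geps_def G_def dGeps_def dG_def ln_div)
  then show ?thesis
    using Geps_diff_le[OF assms, of "1/2" p] by simp
qed

lemma Geps_nonneg: "0 < \<epsilon> \<Longrightarrow> \<epsilon> < 1/2 \<Longrightarrow> 0 \<le> Geps \<epsilon> p"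
  using Geps_ge[of \<epsilon> p] one_minus_ln2_pos by linarith

lemma neg_part_square_le_Geps:
  assumes e: "0 < \<epsilon>" "\<epsilon> < 1/2"
  shows "(min p 0)^2 \<le> 2 * (\<epsilon> * (1 - \<epsilon>)) * Geps \<epsilon> p"
proof (cases "p < 0")
  case False
  then show ?thesis
    using Geps_nonneg[OF e, of p] e by simp
next
  case True
  have "0 \<le> G \<epsilon>"
    using Geps_nonneg[OF e, of \<epsilon>] e by (simp add: Geps_def)
  moreover have "0 \<le> dG \<epsilon> * (p - \<epsilon>)"
    using dG_strict_mono[of \<epsilon> "1 - \<epsilon>"] dG_reflect[of \<epsilon>] True e by (simp add: mult_nonpos_nonpos)
  moreover have "Geps \<epsilon> p = G \<epsilon> + dG \<epsilon> * (p - \<epsilon>) + (p - \<epsilon>)^2 / (2 * (\<epsilon> * (1 - \<epsilon>)))"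
    using True e by (simp add: Geps_def ddG_def)
  ultimately have "(p - \<epsilon>)^2 / (2 * (\<epsilon> * (1 - \<epsilon>))) \<le> Geps \<epsilon> p"
    by linarith
  moreover have "p^2 \<le> (p - \<epsilon>)^2"
    using True e by (simp add: power2_eq_square algebra_simps mult_nonpos_nonpos)
  ultimately show ?thesis
    using True e by (simp add: pos_divide_le_eq mult.commute)
qed

lemma pos_part_square_le_Geps:
  assumes "0 < \<epsilon>" "\<epsilon> < 1/2"
  shows "(max (p - 1) 0)^2 \<le> 2 * (\<epsilon> * (1 - \<epsilon>)) * Geps \<epsilon> p"
proof -
  have "(max (p - 1) 0)^2 = (min (1 - p) 0)^2"
    by (simp add: max_def min_def power2_commute)
  then show ?thesis
    using neg_part_square_le_Geps[OF assms, of "1 - p"] Geps_reflect[of \<epsilon> p] assms by simp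
qed

lemma MG_nonneg:
  assumes "0 < \<epsilon>" "\<epsilon> < 1/2"
  shows "0 \<le> MG \<epsilon> e \<phi> k"
proof -
  let ?a = "\<phi> (fst e)" and ?b = "\<phi> (snd e k)"
  have "0 \<le> (?b - ?a) / (dGeps \<epsilon> ?b - dGeps \<epsilon> ?a)"
    using dGeps_mono[OF assms, of ?a ?b] dGeps_mono[OF assms, of ?b ?a]
    by (cases "?a \<le> ?b") (auto intro: divide_nonpos_nonpos)
  moreover have "0 < Meps \<epsilon> ?a"
    unfolding Meps_def using assms by auto
  ultimately show ?thesis
    unfolding MG_def ddGeps_def Let_def by auto
qed

lemma MG_mult_dGeps_diff:
  assumes "0 < \<epsilon>" "\<epsilon> < 1/2"
  shows "MG \<epsilon> e \<phi> k * (dGeps \<epsilon> (\<phi> (snd e k)) - dGeps \<epsilon> (\<phi> (fst e))) = \<phi> (snd e k) - \<phi> (fst e)"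
proof -
  let ?a = "\<phi> (fst e)" and ?b = "\<phi> (snd e k)"
  have "dGeps \<epsilon> ?b \<noteq> dGeps \<epsilon> ?a" if "?b \<noteq> ?a"
    using dGeps_strict_mono[OF assms, of ?a ?b] dGeps_strict_mono[OF assms, of ?b ?a] that by linarith
  then show ?thesis
    unfolding MG_def Let_def by auto
qed

lemma Fdw_nonneg: "0 \<le> Fdw \<eta> p"
  unfolding Fdw_def by simp

lemma continuous_on_Fdw: "continuous_on S (Fdw \<eta>)"
  unfolding Fdw_def[abs_def] by (intro continuous_intros)

text \<open>The convex--concave splitting: \<open>F = F\<^sub>c + F\<^sub>e\<close> with \<open>F\<^sub>c\<close> convex and \<open>F\<^sub>e\<close> concave,
  so the implicit--explicit difference quotient dominates the increment of \<open>F\<close>.\<close>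
lemma Fdw_diff_le_splitting:
  assumes "\<eta> > 0"
  shows "Fdw \<eta> x - Fdw \<eta> y \<le> (dFc \<eta> x + dFe \<eta> y) * (x - y)"
proof -
  define u where "u = x - 1/2"
  define h where "h = x - y"
  have "Fdw \<eta> x - Fdw \<eta> y - (dFc \<eta> x + dFe \<eta> y) * (x - y)
      = - (1 / (4 * \<eta>^2) * (h^2 * (2 * u^2 + (2 * u - h)^2) + 1/2 * h^2))"
    unfolding Fdw_def dFc_def dFe_def u_def h_def using assms
    by (simp add: field_simps power2_eq_square power3_eq_cube power4_eq_xxxx)
  also have "\<dots> \<le> 0"
    by (simp only: neg_le_0_iff_le) (intro mult_nonneg_nonneg add_nonneg_nonneg, auto)
  finally show ?thesis
    by simp
qed

lemma mono_dFc:
  assumes "\<eta> > 0"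
  shows "mono (dFc \<eta>)"
proof (rule monoI)
  fix a b :: real
  assume "a \<le> b"
  have "dFc \<eta> b - dFc \<eta> a
      = 1 / (4 * \<eta>^2) * ((b - a) * (4 * ((a - 1/2 + (b - 1/2) / 2)^2 + 3/4 * (b - 1/2)^2)))"
    unfolding dFc_def using assms by (simp add: power2_eq_square power3_eq_cube field_simps)
  also have "\<dots> \<ge> 0"
    using \<open>a \<le> b\<close> by simp
  finally show "dFc \<eta> a \<le> dFc \<eta> b"
    by simp
qed

lemma Fdw_le:
  assumes "\<bar>p\<bar> \<le> M"
  shows "Fdw \<eta> p \<le> M^2 * (M + 1)^2 / (4 * \<eta>^2)"
proof -
  have "\<bar>p\<bar> \<le> \<bar>M\<bar>" "\<bar>p - 1\<bar> \<le> \<bar>M + 1\<bar>"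
    using assms by linarith+
  then have "p^2 \<le> M^2" "(p - 1)^2 \<le> (M + 1)^2"
    by (simp_all only: abs_le_square_iff)
  then have "p^2 * (p - 1)^2 \<le> M^2 * (M + 1)^2"
    by (intro mult_mono) auto
  then show ?thesis
    unfolding Fdw_def by (simp add: divide_right_mono)
qed

lemma Fdw_ge:
  assumes "M/2 \<le> \<bar>p\<bar>" "4 \<le> M"
  shows "M^4 / (256 * \<eta>^2) \<le> Fdw \<eta> p"
proof -
  have "\<bar>M/2\<bar> \<le> \<bar>p\<bar>" "\<bar>M/4\<bar> \<le> \<bar>p - 1\<bar>"
    using assms by linarith+
  then have "(M/2)^2 \<le> p^2" "(M/4)^2 \<le> (p - 1)^2"
    by (simp_all only: abs_le_square_iff)
  then have "(M/2)^2 * (M/4)^2 \<le> p^2 * (p - 1)^2"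
    by (intro mult_mono) auto
  then have "M^4 / 64 \<le> p^2 * (p - 1)^2"
    by (simp add: power2_eq_square power4_eq_xxxx)
  then have "M^4 / 64 / (4 * \<eta>^2) \<le> p^2 * (p - 1)^2 / (4 * \<eta>^2)"
    by (rule divide_right_mono) simp
  then show ?thesis
    unfolding Fdw_def by simp
qed

section \<open>Energy decay and entropy growth along the scheme\<close>

lemma mob_ip_self_nonneg:
  assumes "0 < \<epsilon>" "\<epsilon> < 1/2"
  shows "0 \<le> mob_ip X Th \<epsilon> \<phi> \<mu> \<mu>"
proof -
  have "0 \<le> MG \<epsilon> e \<phi> k * grad X e \<mu> $ k * grad X e \<mu> $ k" for e k
    using mult_nonneg_nonneg[OF MG_nonneg[OF assms] zero_le_square[of "grad X e \<mu> $ k"]]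
    by (simp add: mult.assoc)
  then show ?thesis
    unfolding mob_ip_eq_sum elem_vol_def by (intro sum_nonneg mult_nonneg_nonneg[OF measure_nonneg])
qed

lemma mob_ip_dGeps:
  assumes "0 < \<epsilon>" "\<epsilon> < 1/2"
  shows "mob_ip X Th \<epsilon> \<phi> \<mu> (\<lambda>v. dGeps \<epsilon> (\<phi> v)) = grad_ip X Th \<mu> \<phi>"
  unfolding mob_ip_eq_sum grad_ip_eq_sum inner_vec_def
proof (intro sum.cong refl arg_cong2[where f = "(*)"])
  fix e k
  have "MG \<epsilon> e \<phi> k * grad X e (\<lambda>v. dGeps \<epsilon> (\<phi> v)) $ k = grad X e \<phi> $ k"
    unfolding grad_def using MG_mult_dGeps_diff[OF assms, of e \<phi> k] by (simp add: times_divide_eq_right)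
  then show "MG \<epsilon> e \<phi> k * grad X e \<mu> $ k * grad X e (\<lambda>v. dGeps \<epsilon> (\<phi> v)) $ k
      = grad X e \<mu> $ k \<bullet> grad X e \<phi> $ k"
    by (simp add: ac_simps)
qed

definition lumped_energy :: "(nat \<Rightarrow> real^'d) \<Rightarrow> 'd elem set \<Rightarrow> real \<Rightarrow> (nat \<Rightarrow> real) \<Rightarrow> real" where
  "lumped_energy X Th \<eta> u = 1/2 * grad_ip X Th u u + int_h X Th (\<lambda>v. Fdw \<eta> (u v))"

lemma lumped_energy_nonneg:
  assumes "\<And>e. e \<in> Th \<Longrightarrow> structured_elem X e"
  shows "0 \<le> lumped_energy X Th \<eta> u"
  using int_h_nonneg[OF assms Fdw_nonneg] grad_ip_self_nonneg[of X Th u]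
  by (simp add: lumped_energy_def)

lemma grad_ip_self_le_lumped_energy:
  assumes "\<And>e. e \<in> Th \<Longrightarrow> structured_elem X e"
  shows "grad_ip X Th u u \<le> 2 * lumped_energy X Th \<eta> u"
  using int_h_nonneg[OF assms Fdw_nonneg] by (simp add: lumped_energy_def)

text \<open>One step \<open>y = \<phi>\<^sup>n \<mapsto> (x, \<mu>) = (\<phi>\<^sup>n\<^sup>+\<^sup>1, \<mu>\<^sup>n\<^sup>+\<^sup>1)\<close> of the scheme, with test functions \<open>\<psi>\<close> given by
  their nodal values.\<close>
definition Geps_step :: "(nat \<Rightarrow> real^'d) \<Rightarrow> 'd elem set \<Rightarrow> real \<Rightarrow> real \<Rightarrow> real
    \<Rightarrow> (nat \<Rightarrow> real) \<Rightarrow> (nat \<Rightarrow> real) \<Rightarrow> (nat \<Rightarrow> real) \<Rightarrow> bool" where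
  "Geps_step X Th \<eta> \<epsilon> dt y x \<mu> \<longleftrightarrow>
     (\<forall>\<psi>. 1 / dt * ip_h X Th (\<lambda>v. x v - y v) \<psi> + mob_ip X Th \<epsilon> x \<mu> \<psi> = 0
        \<and> grad_ip X Th x \<psi> + ip_h X Th (\<lambda>v. dFc \<eta> (x v) + dFe \<eta> (y v)) \<psi> = ip_h X Th \<mu> \<psi>)"

lemma Geps_scheme_step:
  "Geps_scheme X Th \<eta> \<epsilon> dt N \<phi> \<mu> \<Longrightarrow> m < N \<Longrightarrow> Geps_step X Th \<eta> \<epsilon> dt (\<phi> m) (\<phi> (Suc m)) (\<mu> (Suc m))"
  by (simp add: Geps_scheme_def Geps_step_def)

lemma Geps_stepD:
  assumes "Geps_step X Th \<eta> \<epsilon> dt y x \<mu>"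
  shows "1 / dt * ip_h X Th (\<lambda>v. x v - y v) \<psi> + mob_ip X Th \<epsilon> x \<mu> \<psi> = 0"
    and "grad_ip X Th x \<psi> + ip_h X Th (\<lambda>v. dFc \<eta> (x v) + dFe \<eta> (y v)) \<psi> = ip_h X Th \<mu> \<psi>"
  using assms unfolding Geps_step_def by auto

lemma lumped_energy_step:
  assumes mesh: "\<And>e. e \<in> Th \<Longrightarrow> structured_elem X e"
    and e: "0 < \<epsilon>" "\<epsilon> < 1/2" and eta: "\<eta> > 0" and dt: "dt > 0"
    and step: "Geps_step X Th \<eta> \<epsilon> dt y x \<mu>"
  shows "lumped_energy X Th \<eta> x \<le> lumped_energy X Th \<eta> y"
proof -
  define f where "f = (\<lambda>v. dFc \<eta> (x v) + dFe \<eta> (y v))"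
  define \<delta> where "\<delta> = (\<lambda>v. x v - y v)"
  have "int_h X Th (\<lambda>v. \<delta> v * \<mu> v) = - dt * mob_ip X Th \<epsilon> x \<mu> \<mu>"
    using Geps_stepD(1)[OF step, of \<mu>] dt unfolding ip_h_def \<delta>_def by (simp add: field_simps)
  then have "int_h X Th (\<lambda>v. \<mu> v * \<delta> v) \<le> 0"
    using mob_ip_self_nonneg[OF e, of X Th x \<mu>] dt by (simp add: mult.commute mult_nonneg_nonneg)
  moreover have "grad_ip X Th x \<delta> + int_h X Th (\<lambda>v. f v * \<delta> v) = int_h X Th (\<lambda>v. \<mu> v * \<delta> v)"
    using Geps_stepD(2)[OF step, of \<delta>] unfolding ip_h_def f_def by simp
  moreover have "int_h X Th (\<lambda>v. Fdw \<eta> (x v)) - int_h X Th (\<lambda>v. Fdw \<eta> (y v)) \<le> int_h X Th (\<lambda>v. f v * \<delta> v)"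
    unfolding int_h_diff[symmetric] f_def \<delta>_def by (rule int_h_mono) (simp_all add: mesh Fdw_diff_le_splitting[OF eta])
  moreover have "1/2 * grad_ip X Th x x - 1/2 * grad_ip X Th y y \<le> grad_ip X Th x \<delta>"
    unfolding \<delta>_def by (rule grad_ip_diff_right_ge)
  ultimately show ?thesis
    unfolding lumped_energy_def by linarith
qed

text \<open>Testing the second equation with \<open>\<mu> - I\<^sub>h(F\<^sub>c'(x) + F\<^sub>e'(y))\<close> compares \<open>\<nabla>\<mu>\<close> with the gradient of
  the discrete chemical potential, whose convex part pairs nonnegatively with \<open>\<nabla>x\<close>.\<close>
lemma Geps_step_grad_ip_ge:
  assumes mesh: "\<And>e. e \<in> Th \<Longrightarrow> structured_elem X e"
    and eta: "\<eta> > 0" and step: "Geps_step X Th \<eta> \<epsilon> dt y x \<mu>"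
  shows "- 1 / (4 * \<eta>^2) * grad_ip X Th y x \<le> grad_ip X Th \<mu> x"
proof -
  define f where "f = (\<lambda>v. dFc \<eta> (x v) + dFe \<eta> (y v))"
  define r where "r = (\<lambda>v. \<mu> v - f v)"
  have "grad_ip X Th x r = int_h X Th (\<lambda>v. \<mu> v * r v) - int_h X Th (\<lambda>v. f v * r v)"
    using Geps_stepD(2)[OF step, of r] unfolding ip_h_def f_def by (simp add: eq_diff_eq)
  also have "\<dots> = int_h X Th (\<lambda>v. r v * r v)"
    unfolding int_h_diff[symmetric] by (simp add: r_def algebra_simps)
  also have "\<dots> \<ge> 0"
    by (rule int_h_nonneg[OF mesh zero_le_square])
  finally have "grad_ip X Th f x \<le> grad_ip X Th \<mu> x"
    by (simp add: r_def grad_ip_commute[of X Th x] grad_ip_diff_left)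
  moreover have "grad_ip X Th f x = grad_ip X Th (\<lambda>v. dFc \<eta> (x v)) x - 1 / (4 * \<eta>^2) * grad_ip X Th y x"
    unfolding f_def grad_ip_add_left dFe_def grad_ip_cmult_left by simp
  ultimately show ?thesis
    using grad_ip_mono_comp_nonneg[OF mono_dFc[OF eta], of X Th x] by linarith
qed

lemma Geps_entropy_step:
  assumes mesh: "\<And>e. e \<in> Th \<Longrightarrow> structured_elem X e"
    and e: "0 < \<epsilon>" "\<epsilon> < 1/2" and eta: "\<eta> > 0" and dt: "dt > 0"
    and step: "Geps_step X Th \<eta> \<epsilon> dt y x \<mu>"
  shows "int_h X Th (\<lambda>v. Geps \<epsilon> (x v)) - int_h X Th (\<lambda>v. Geps \<epsilon> (y v))
           \<le> dt / (8 * \<eta>^2) * (grad_ip X Th x x + grad_ip X Th y y)"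
proof -
  have "1 / dt * int_h X Th (\<lambda>v. (x v - y v) * dGeps \<epsilon> (x v)) + grad_ip X Th \<mu> x = 0"
    using Geps_stepD(1)[OF step, of "\<lambda>v. dGeps \<epsilon> (x v)"] unfolding ip_h_def mob_ip_dGeps[OF e] .
  then have "int_h X Th (\<lambda>v. (x v - y v) * dGeps \<epsilon> (x v)) = - dt * grad_ip X Th \<mu> x"
    using dt by (simp add: field_simps)
  moreover have "int_h X Th (\<lambda>v. Geps \<epsilon> (x v)) - int_h X Th (\<lambda>v. Geps \<epsilon> (y v))
      \<le> int_h X Th (\<lambda>v. dGeps \<epsilon> (x v) * (x v - y v))"
    unfolding int_h_diff[symmetric] by (rule int_h_mono) (simp_all add: mesh Geps_diff_le[OF e])
  moreover have "int_h X Th (\<lambda>v. dGeps \<epsilon> (x v) * (x v - y v))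
      = int_h X Th (\<lambda>v. (x v - y v) * dGeps \<epsilon> (x v))"
    by (simp add: mult.commute)
  moreover have "- dt * grad_ip X Th \<mu> x \<le> dt * (1 / (4 * \<eta>^2) * grad_ip X Th y x)"
    using mult_left_mono[OF Geps_step_grad_ip_ge[OF mesh eta step], of dt] dt by simp
  moreover have "dt * (1 / (4 * \<eta>^2) * grad_ip X Th y x)
      \<le> dt * (1 / (4 * \<eta>^2) * (1/2 * (grad_ip X Th x x + grad_ip X Th y y)))"
    using grad_ip_le_half_sum[of X Th y x] dt eta by (intro mult_left_mono) auto
  ultimately show ?thesis
    by (simp add: field_simps)
qed

lemma Geps_scheme_stability:
  assumes mesh: "\<And>e. e \<in> Th \<Longrightarrow> structured_elem X e"
    and e: "0 < \<epsilon>" "\<epsilon> < 1/2" and eta: "\<eta> > 0" and dt: "dt > 0"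
    and sch: "Geps_scheme X Th \<eta> \<epsilon> dt N \<phi> \<mu>"
  shows "k \<le> N \<Longrightarrow> lumped_energy X Th \<eta> (\<phi> k) \<le> lumped_energy X Th \<eta> (\<phi> 0)
          \<and> int_h X Th (\<lambda>v. Geps \<epsilon> (\<phi> k v))
              \<le> int_h X Th (\<lambda>v. Geps \<epsilon> (\<phi> 0 v)) + real k * dt * lumped_energy X Th \<eta> (\<phi> 0) / (2 * \<eta>^2)"
proof (induction k)
  case 0
  then show ?case
    by simp
next
  case (Suc k)
  let ?E = "lumped_energy X Th \<eta>"
  have step: "Geps_step X Th \<eta> \<epsilon> dt (\<phi> k) (\<phi> (Suc k)) (\<mu> (Suc k))"
    using Geps_scheme_step[OF sch] Suc.prems by simp
  have IH: "?E (\<phi> k) \<le> ?E (\<phi> 0)"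
    "int_h X Th (\<lambda>v. Geps \<epsilon> (\<phi> k v)) \<le> int_h X Th (\<lambda>v. Geps \<epsilon> (\<phi> 0 v)) + real k * dt * ?E (\<phi> 0) / (2 * \<eta>^2)"
    using Suc by auto
  have E: "?E (\<phi> (Suc k)) \<le> ?E (\<phi> k)"
    by (rule lumped_energy_step[OF mesh e eta dt step])
  have "grad_ip X Th (\<phi> (Suc k)) (\<phi> (Suc k)) + grad_ip X Th (\<phi> k) (\<phi> k) \<le> 4 * ?E (\<phi> 0)"
    using grad_ip_self_le_lumped_energy[where Th = Th and u = "\<phi> (Suc k)" and \<eta> = \<eta>, OF mesh]
      grad_ip_self_le_lumped_energy[where Th = Th and u = "\<phi> k" and \<eta> = \<eta>, OF mesh] E IH(1)
    by linarith
  then have "dt / (8 * \<eta>^2) * (grad_ip X Th (\<phi> (Suc k)) (\<phi> (Suc k)) + grad_ip X Th (\<phi> k) (\<phi> k))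
      \<le> dt / (8 * \<eta>^2) * (4 * ?E (\<phi> 0))"
    using dt by (intro mult_left_mono) auto
  also have "\<dots> = dt * ?E (\<phi> 0) / (2 * \<eta>^2)"
    by simp
  finally have "int_h X Th (\<lambda>v. Geps \<epsilon> (\<phi> (Suc k) v))
      \<le> int_h X Th (\<lambda>v. Geps \<epsilon> (\<phi> k v)) + dt * ?E (\<phi> 0) / (2 * \<eta>^2)"
    using Geps_entropy_step[OF mesh e eta dt step] by linarith
  moreover have "real (Suc k) * dt * ?E (\<phi> 0) / (2 * \<eta>^2)
      = real k * dt * ?E (\<phi> 0) / (2 * \<eta>^2) + dt * ?E (\<phi> 0) / (2 * \<eta>^2)"
    by (simp add: add_divide_distrib[symmetric] algebra_simps)
  ultimately show ?case
    using IH E by linarith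
qed

section \<open>Lumped versus exact energy\<close>

lemma integral_ge_on_homothetic_image:
  fixes f :: "'a::euclidean_space \<Rightarrow> real"
  assumes S: "compact S" "convex S" "z \<in> S" and t: "0 < t" "t \<le> 1"
    and f: "continuous_on S f" "\<And>y. y \<in> S \<Longrightarrow> 0 \<le> f y"
    and c: "\<And>y. y \<in> S \<Longrightarrow> c \<le> f (t *\<^sub>R y + (1 - t) *\<^sub>R z)"
  shows "c * (t ^ DIM('a) * measure lebesgue S) \<le> integral S f"
proof -
  define T where "T = (\<lambda>y. t *\<^sub>R y + (1 - t) *\<^sub>R z)"
  have TS: "T ` S \<subseteq> S"
    using S t by (auto simp: T_def intro: convexD)
  have cT: "compact (T ` S)"
    unfolding T_def by (intro compact_continuous_image S continuous_intros)
  have intT: "f integrable_on T ` S" and intS: "f integrable_on S"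
    using f(1) TS by (auto intro: integrable_on_compact_continuous cT S continuous_on_subset)
  have "c * measure lebesgue (T ` S) = integral (T ` S) (\<lambda>_. c)"
    using lmeasure_integral[OF lmeasurable_compact[OF cT]] integral_mult_right[of "T ` S" c "\<lambda>_. 1"]
    by simp
  also have "\<dots> \<le> integral (T ` S) f"
    using c by (intro integral_le intT integrable_on_const lmeasurable_compact cT) (auto simp: T_def)
  also have "\<dots> \<le> integral S f"
    using f(2) by (intro integral_subset_le TS intT intS) auto
  finally show ?thesis
    using t unfolding T_def measure_lebesgue_affine by simp
qed

lemma integral_P1_le:
  assumes "structured_elem X e" "\<And>v. v \<in> verts e \<Longrightarrow> w v \<le> K"
  shows "integral (elem_set X e) (P1 X e w) \<le> K * elem_vol X (e :: 'd::finite elem)"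
proof -
  have "integral (elem_set X e) (P1 X e w) \<le> integral (elem_set X e) (\<lambda>_. K)"
    using P1_mono[OF assms(1), of _ w "\<lambda>_. K"] assms(2)
    by (intro integral_le integrable_P1) (auto simp: P1_const integral_const_elem_set
        intro: integrable_on_compact_continuous compact_elem_set)
  then show ?thesis
    by (simp add: integral_const_elem_set)
qed

text \<open>If the nodal maximum \<open>M\<close> of \<open>|\<phi>|\<close> is attained at \<open>v\<^sub>0\<close>, then \<open>|I\<^sub>h \<phi>| \<ge> M/2\<close> on the copy of the element
  shrunk by the factor \<open>1/4\<close> towards \<open>v\<^sub>0\<close>, whose volume is at least \<open>1/64\<close> of the element's as \<open>d \<le> 3\<close>.\<close>
lemma integral_Fdw_P1_ge:
  fixes X :: "nat \<Rightarrow> real^'d::finite"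
  assumes se: "structured_elem X e" and d: "CARD('d) \<le> 3"
    and v0: "v0 \<in> verts e" "\<bar>\<phi> v0\<bar> = M" and M: "\<And>v. v \<in> verts e \<Longrightarrow> \<bar>\<phi> v\<bar> \<le> M" "4 \<le> M"
  shows "M^4 / (256 * \<eta>^2) * (elem_vol X e / 64) \<le> integral (elem_set X e) (\<lambda>y. Fdw \<eta> (P1 X e \<phi> y))"
proof -
  let ?c = "M^4 / (256 * \<eta>^2)"
  have z: "X v0 \<in> elem_set X e"
    unfolding elem_set_def using v0 by (intro hull_inc) auto
  have large: "?c \<le> Fdw \<eta> (P1 X e \<phi> ((1/4) *\<^sub>R y + (3/4) *\<^sub>R X v0))" if "y \<in> elem_set X e" for y
  proof (rule Fdw_ge[OF _ M(2)])
    have "P1 X e \<phi> ((1/4) *\<^sub>R y + (3/4) *\<^sub>R X v0) = 1/4 * P1 X e \<phi> y + 3/4 * \<phi> v0"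
      using P1_affine[of X e \<phi> "3/4" y "X v0"] P1_vertex[OF se v0(1)] by simp
    then show "M/2 \<le> \<bar>P1 X e \<phi> ((1/4) *\<^sub>R y + (3/4) *\<^sub>R X v0)\<bar>"
      using P1_abs_le[where w = \<phi>, OF se that M(1)] v0(2) by linarith
  qed
  have cont: "continuous_on (elem_set X e) (\<lambda>y. Fdw \<eta> (P1 X e \<phi> y))"
    by (rule continuous_on_compose2[OF continuous_on_Fdw continuous_on_P1]) auto
  have "?c * ((1/4) ^ DIM(real^'d) * measure lebesgue (elem_set X e))
      \<le> integral (elem_set X e) (\<lambda>y. Fdw \<eta> (P1 X e \<phi> y))"
    by (rule integral_ge_on_homothetic_image[OF compact_elem_set convex_elem_set z])
      (simp_all add: cont Fdw_nonneg large)
  moreover have "(1/4::real) ^ 3 \<le> (1/4) ^ DIM(real^'d)"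
    using d by (intro power_decreasing) auto
  then have "elem_vol X e / 64 \<le> (1/4) ^ DIM(real^'d) * measure lebesgue (elem_set X e)"
    using mult_right_mono[OF _ measure_nonneg, of "(1/4) ^ 3" "(1/4) ^ DIM(real^'d)" lebesgue "elem_set X e"]
    by (simp add: elem_vol_def power3_eq_cube)
  then have "?c * (elem_vol X e / 64) \<le> ?c * ((1/4) ^ DIM(real^'d) * measure lebesgue (elem_set X e))"
    by (rule mult_left_mono) simp
  ultimately show ?thesis
    by linarith
qed

lemma integral_P1_Fdw_le:
  fixes X :: "nat \<Rightarrow> real^'d::finite"
  assumes se: "structured_elem X e" and d: "CARD('d) \<le> 3"
  shows "integral (elem_set X e) (P1 X e (\<lambda>v. Fdw \<eta> (\<phi> v)))
           \<le> 6400 * integral (elem_set X e) (\<lambda>y. Fdw \<eta> (P1 X e \<phi> y)) + 100 / \<eta>^2 * elem_vol X e"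
proof -
  define M where "M = Max ((\<lambda>v. \<bar>\<phi> v\<bar>) ` verts e)"
  have fin: "finite ((\<lambda>v. \<bar>\<phi> v\<bar>) ` verts e)" and ne: "(\<lambda>v. \<bar>\<phi> v\<bar>) ` verts e \<noteq> {}"
    by (simp_all add: finite_verts verts_def)
  have M: "\<And>v. v \<in> verts e \<Longrightarrow> \<bar>\<phi> v\<bar> \<le> M"
    unfolding M_def using fin by simp
  obtain v0 where v0: "v0 \<in> verts e" "\<bar>\<phi> v0\<bar> = M"
    using Max_in[OF fin ne] unfolding M_def by auto
  define K where "K = M^2 * (M + 1)^2 / (4 * \<eta>^2)"
  have vol: "0 \<le> elem_vol X e"
    by (simp add: elem_vol_def)
  have lumped: "integral (elem_set X e) (P1 X e (\<lambda>v. Fdw \<eta> (\<phi> v))) \<le> K * elem_vol X e"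
    unfolding K_def using M by (intro integral_P1_le[OF se] Fdw_le)
  have exact: "0 \<le> integral (elem_set X e) (\<lambda>y. Fdw \<eta> (P1 X e \<phi> y))"
    by (intro integral_nonneg integrable_P1_comp continuous_on_Fdw) (simp add: Fdw_nonneg)
  have "0 \<le> 100 / \<eta>^2 * elem_vol X e"
    using vol by simp
  show ?thesis
  proof (cases "M \<le> 4")
    case True
    have "M^2 * (M + 1)^2 \<le> 4^2 * 5^2"
      using True v0 by (intro mult_mono power_mono) auto
    then have "K \<le> 4^2 * 5^2 / (4 * \<eta>^2)"
      unfolding K_def by (rule divide_right_mono) simp
    then have "K * elem_vol X e \<le> 100 / \<eta>^2 * elem_vol X e"
      by (intro mult_right_mono[OF _ vol]) simp
    then show ?thesis
      using lumped exact by linarith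
  next
    case False
    then have M4: "4 \<le> M"
      by simp
    have "M^2 * (M + 1)^2 \<le> M^2 * (5/4 * M)^2"
      using M4 by (intro mult_left_mono power_mono) auto
    then have "K \<le> M^2 * (5/4 * M)^2 / (4 * \<eta>^2)"
      unfolding K_def by (rule divide_right_mono) simp
    also have "\<dots> = 25 * M^4 / (64 * \<eta>^2)"
      by (simp add: power_mult_distrib power2_eq_square power4_eq_xxxx)
    finally have "K * elem_vol X e \<le> 25 * M^4 / (64 * \<eta>^2) * elem_vol X e"
      by (rule mult_right_mono[OF _ vol])
    also have "\<dots> = 6400 * (M^4 / (256 * \<eta>^2) * (elem_vol X e / 64))"
      by simp
    also have "\<dots> \<le> 6400 * integral (elem_set X e) (\<lambda>y. Fdw \<eta> (P1 X e \<phi> y))"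
      using mult_left_mono[OF integral_Fdw_P1_ge[where \<phi> = \<phi> and \<eta> = \<eta>, OF se d v0 M M4], of 6400] by simp
    finally show ?thesis
      using lumped \<open>0 \<le> 100 / \<eta>^2 * elem_vol X e\<close> by linarith
  qed
qed

lemma energy_eq_sum:
  "energy X Th \<eta> \<phi> = (\<Sum>e\<in>Th. 1/2 * (elem_vol X e * (grad X e \<phi> \<bullet> grad X e \<phi>))
     + integral (elem_set X e) (\<lambda>y. Fdw \<eta> (P1 X e \<phi> y)))"
  unfolding energy_def
proof (rule sum.cong[OF refl])
  fix e
  have "integral (elem_set X e) (\<lambda>y. 1/2 * (norm (grad X e \<phi>))^2 + Fdw \<eta> (P1 X e \<phi> y))
      = integral (elem_set X e) (\<lambda>y. 1/2 * (norm (grad X e \<phi>))^2)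
        + integral (elem_set X e) (\<lambda>y. Fdw \<eta> (P1 X e \<phi> y))"
    by (intro integral_add integrable_P1_comp continuous_on_Fdw integrable_on_compact_continuous
        compact_elem_set continuous_on_const)
  then show "integral (elem_set X e) (\<lambda>y. 1/2 * (norm (grad X e \<phi>))^2 + Fdw \<eta> (P1 X e \<phi> y))
      = 1/2 * (elem_vol X e * (grad X e \<phi> \<bullet> grad X e \<phi>)) + integral (elem_set X e) (\<lambda>y. Fdw \<eta> (P1 X e \<phi> y))"
    by (simp add: integral_const_elem_set power2_norm_eq_inner)
qed

lemma lumped_energy_le_energy:
  fixes X :: "nat \<Rightarrow> real^'d::finite"
  assumes mesh: "\<And>e. e \<in> Th \<Longrightarrow> structured_elem X e" and d: "CARD('d) \<le> 3"
  shows "lumped_energy X Th \<eta> \<phi> \<le> 6400 * energy X Th \<eta> \<phi> + 100 / \<eta>^2 * (\<Sum>e\<in>Th. elem_vol X e)"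
proof -
  have "lumped_energy X Th \<eta> \<phi> = (\<Sum>e\<in>Th. 1/2 * (elem_vol X e * (grad X e \<phi> \<bullet> grad X e \<phi>))
      + integral (elem_set X e) (P1 X e (\<lambda>v. Fdw \<eta> (\<phi> v))))"
    unfolding lumped_energy_def grad_ip_eq_sum int_h_def by (simp add: sum.distrib sum_distrib_left)
  also have "\<dots> \<le> (\<Sum>e\<in>Th. 6400 * (1/2 * (elem_vol X e * (grad X e \<phi> \<bullet> grad X e \<phi>))
      + integral (elem_set X e) (\<lambda>y. Fdw \<eta> (P1 X e \<phi> y))) + 100 / \<eta>^2 * elem_vol X e)"
  proof (rule sum_mono)
    fix e
    assume "e \<in> Th"
    have "0 \<le> elem_vol X e * (grad X e \<phi> \<bullet> grad X e \<phi>)"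
      by (simp add: elem_vol_def)
    then show "1/2 * (elem_vol X e * (grad X e \<phi> \<bullet> grad X e \<phi>)) + integral (elem_set X e) (P1 X e (\<lambda>v. Fdw \<eta> (\<phi> v)))
        \<le> 6400 * (1/2 * (elem_vol X e * (grad X e \<phi> \<bullet> grad X e \<phi>))
          + integral (elem_set X e) (\<lambda>y. Fdw \<eta> (P1 X e \<phi> y))) + 100 / \<eta>^2 * elem_vol X e"
      using integral_P1_Fdw_le[OF mesh[OF \<open>e \<in> Th\<close>] d, of \<eta> \<phi>] unfolding distrib_left by linarith
  qed
  also have "\<dots> = 6400 * energy X Th \<eta> \<phi> + 100 / \<eta>^2 * (\<Sum>e\<in>Th. elem_vol X e)"
    unfolding energy_eq_sum by (simp add: sum.distrib sum_distrib_left)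
  finally show ?thesis .
qed

lemma sum_elem_vol_le_int_h_Geps:
  assumes "\<And>e. e \<in> Th \<Longrightarrow> structured_elem X e" "0 < \<epsilon>" "\<epsilon> < 1/2"
  shows "(\<Sum>e\<in>Th. elem_vol X e) \<le> int_h X Th (\<lambda>v. Geps \<epsilon> (\<phi> v)) / (1 - ln 2)"
proof -
  have "(1 - ln 2) * (\<Sum>e\<in>Th. elem_vol X e) \<le> int_h X Th (\<lambda>v. Geps \<epsilon> (\<phi> v))"
    unfolding int_h_const[symmetric] using assms by (intro int_h_mono Geps_ge)
  then show ?thesis
    using one_minus_ln2_pos by (simp add: pos_le_divide_eq mult.commute)
qed

section \<open>Bounds on the overshoot\<close>

lemma sum_integral_P1_square_le:
  assumes mesh: "\<And>e. e \<in> Th \<Longrightarrow> structured_elem X e" and u: "\<And>v. (u v)^2 \<le> c * g v"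
  shows "(\<Sum>e\<in>Th. integral (elem_set X e) (\<lambda>y. (P1 X e u y)^2)) \<le> c * int_h X Th g"
proof -
  have "(\<Sum>e\<in>Th. integral (elem_set X e) (\<lambda>y. (P1 X e u y)^2)) \<le> int_h X Th (\<lambda>v. (u v)^2)"
    unfolding int_h_def
  proof (rule sum_mono)
    fix e
    assume "e \<in> Th"
    show "integral (elem_set X e) (\<lambda>y. (P1 X e u y)^2) \<le> integral (elem_set X e) (P1 X e (\<lambda>v. (u v)^2))"
      by (intro integral_le integrable_P1 integrable_P1_comp continuous_intros P1_square_le mesh \<open>e \<in> Th\<close>)
  qed
  also have "\<dots> \<le> int_h X Th (\<lambda>v. c * g v)"
    by (rule int_h_mono) (simp_all add: mesh u)
  finally show ?thesis
    by (simp add: int_h_cmult)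
qed

text \<open>\<open>G\<^sub>0\<close> plus \<open>T/(2\<eta>\<^sup>2)\<close> times the bound \<open>6400 E\<^sub>0 + 100 |\<Omega>|/\<eta>\<^sup>2\<close> on the initial lumped energy,
  where \<open>|\<Omega>| \<le> G\<^sub>0/(1 - ln 2)\<close>.\<close>
definition entropy_bound :: "real \<Rightarrow> real \<Rightarrow> real \<Rightarrow> real \<Rightarrow> real" where
  "entropy_bound T \<eta> E0 G0 = G0 + T / (2 * \<eta>^2) * (6400 * E0 + 100 / (\<eta>^2 * (1 - ln 2)) * G0)"

lemma Geps_scheme_entropy_le:
  fixes X :: "nat \<Rightarrow> real^'d::finite"
  assumes mesh: "\<And>e. e \<in> Th \<Longrightarrow> structured_elem X e" and d: "CARD('d) \<le> 3"
    and e: "0 < \<epsilon>" "\<epsilon> < 1/2" and eta: "\<eta> > 0" and T: "T > 0" and N: "0 < N" "k \<le> N"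
    and sch: "Geps_scheme X Th \<eta> \<epsilon> (T / real N) N \<phi> \<mu>"
  shows "int_h X Th (\<lambda>v. Geps \<epsilon> (\<phi> k v))
           \<le> entropy_bound T \<eta> (energy X Th \<eta> (\<phi> 0)) (int_h X Th (\<lambda>v. Geps \<epsilon> (\<phi> 0 v)))"
proof -
  let ?G0 = "int_h X Th (\<lambda>v. Geps \<epsilon> (\<phi> 0 v))" and ?E = "lumped_energy X Th \<eta> (\<phi> 0)"
  have dt: "T / real N > 0"
    using T N by simp
  have "100 / \<eta>^2 * (\<Sum>e\<in>Th. elem_vol X e) \<le> 100 / \<eta>^2 * (?G0 / (1 - ln 2))"
    using sum_elem_vol_le_int_h_Geps[where Th = Th and \<phi> = "\<phi> 0", OF mesh e]
    by (rule mult_left_mono) simp_all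
  then have "?E \<le> 6400 * energy X Th \<eta> (\<phi> 0) + 100 / (\<eta>^2 * (1 - ln 2)) * ?G0"
    using lumped_energy_le_energy[where Th = Th and \<eta> = \<eta> and \<phi> = "\<phi> 0", OF mesh d] by simp
  moreover have "real k * (T / real N) \<le> T"
    using T N by (simp add: field_simps)
  ultimately have "real k * (T / real N) * ?E \<le> T * (6400 * energy X Th \<eta> (\<phi> 0) + 100 / (\<eta>^2 * (1 - ln 2)) * ?G0)"
    using lumped_energy_nonneg[where Th = Th and \<eta> = \<eta> and u = "\<phi> 0", OF mesh] T
    by (intro mult_mono) auto
  then have "real k * (T / real N) * ?E / (2 * \<eta>^2)
      \<le> T * (6400 * energy X Th \<eta> (\<phi> 0) + 100 / (\<eta>^2 * (1 - ln 2)) * ?G0) / (2 * \<eta>^2)"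
    by (rule divide_right_mono) simp
  then show ?thesis
    using conjunct2[OF Geps_scheme_stability[OF mesh e eta dt sch N(2)]]
    unfolding entropy_bound_def times_divide_eq_left by linarith
qed

lemma Geps_scheme_overshoot_bounds:
  fixes X :: "nat \<Rightarrow> real^'d::finite"
  assumes mesh: "structured_mesh X Nd Th" and d: "CARD('d) \<le> 3" and e: "0 < \<epsilon>" "\<epsilon> < 1/2"
    and eta: "\<eta> > 0" and T: "T > 0" and N: "0 < N" "n < N"
    and sch: "Geps_scheme X Th \<eta> \<epsilon> (T / real N) N \<phi> \<mu>"
  defines "C0 \<equiv> 2 * \<eta>^2 * max 0 (entropy_bound T \<eta> (energy X Th \<eta> (\<phi> 0)) (int_h X Th (\<lambda>v. Geps \<epsilon> (\<phi> 0 v))))"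
  shows "(\<Sum>e\<in>Th. integral (elem_set X e) (\<lambda>y. (P1 X e (\<lambda>v. min (\<phi> (Suc n) v) 0) y)^2))
           \<le> C0 * (\<epsilon> * (1 - \<epsilon>) / \<eta>^2)"
    and "C0 * (\<epsilon> * (1 - \<epsilon>) / \<eta>^2) \<le> C0 * (\<epsilon> / \<eta>^2)"
    and "(\<Sum>e\<in>Th. integral (elem_set X e) (\<lambda>y. (P1 X e (\<lambda>v. max (\<phi> (Suc n) v - 1) 0) y)^2))
           \<le> C0 * (\<epsilon> * (1 - \<epsilon>) / \<eta>^2)"
proof -
  have elems: "\<And>e. e \<in> Th \<Longrightarrow> structured_elem X e"
    using mesh by (simp add: structured_mesh_def)
  have "int_h X Th (\<lambda>v. Geps \<epsilon> (\<phi> (Suc n) v))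
      \<le> max 0 (entropy_bound T \<eta> (energy X Th \<eta> (\<phi> 0)) (int_h X Th (\<lambda>v. Geps \<epsilon> (\<phi> 0 v))))"
    using Geps_scheme_entropy_le[OF elems d e eta T N(1) _ sch, of "Suc n"] N(2) by simp
  then have "2 * (\<epsilon> * (1 - \<epsilon>)) * int_h X Th (\<lambda>v. Geps \<epsilon> (\<phi> (Suc n) v))
      \<le> C0 * (\<epsilon> * (1 - \<epsilon>) / \<eta>^2)"
    using e eta unfolding C0_def by (simp add: mult_left_mono)
  then show "(\<Sum>e\<in>Th. integral (elem_set X e) (\<lambda>y. (P1 X e (\<lambda>v. min (\<phi> (Suc n) v) 0) y)^2))
           \<le> C0 * (\<epsilon> * (1 - \<epsilon>) / \<eta>^2)"
    and "(\<Sum>e\<in>Th. integral (elem_set X e) (\<lambda>y. (P1 X e (\<lambda>v. max (\<phi> (Suc n) v - 1) 0) y)^2))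
           \<le> C0 * (\<epsilon> * (1 - \<epsilon>) / \<eta>^2)"
    using sum_integral_P1_square_le[OF elems neg_part_square_le_Geps[OF e]]
      sum_integral_P1_square_le[OF elems pos_part_square_le_Geps[OF e]] by (blast intro: order_trans)+
  show "C0 * (\<epsilon> * (1 - \<epsilon>) / \<eta>^2) \<le> C0 * (\<epsilon> / \<eta>^2)"
    using e unfolding C0_def by (intro mult_left_mono divide_right_mono) auto
qed

theorem corollary1:
  fixes T \<eta> :: real
  assumes "T > 0" and "\<eta> > 0" and "CARD('d::finite) \<in> {1, 2, 3}"
  shows "\<exists>C :: real \<Rightarrow> real \<Rightarrow> real.
    \<forall>(X :: nat \<Rightarrow> real^'d) Nd Th \<epsilon> (N::nat) \<phi> \<mu> n.
      structured_mesh X Nd Th \<and> 0 < \<epsilon> \<and> \<epsilon> < 1/2 \<and> 0 < N \<and> n < N \<and>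
      Geps_scheme X Th \<eta> \<epsilon> (T / real N) N \<phi> \<mu> \<longrightarrow>
      (let C0 = C (energy X Th \<eta> (\<phi> 0)) (int_h X Th (\<lambda>v. Geps \<epsilon> (\<phi> 0 v))) in
        (\<Sum>e\<in>Th. integral (elem_set X e)
            (\<lambda>y. (P1 X e (\<lambda>v. min (\<phi> (Suc n) v) 0) y)^2))
          \<le> C0 * (\<epsilon> * (1 - \<epsilon>) / \<eta>^2)
        \<and> C0 * (\<epsilon> * (1 - \<epsilon>) / \<eta>^2) \<le> C0 * (\<epsilon> / \<eta>^2)
        \<and> (\<Sum>e\<in>Th. integral (elem_set X e)
            (\<lambda>y. (P1 X e (\<lambda>v. max (\<phi> (Suc n) v - 1) 0) y)^2))
          \<le> C0 * (\<epsilon> * (1 - \<epsilon>) / \<eta>^2))"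
  using assms
  by (intro exI[of _ "\<lambda>E0 G0. 2 * \<eta>^2 * max 0 (entropy_bound T \<eta> E0 G0)"] allI impI,
      unfold Let_def, intro conjI Geps_scheme_overshoot_bounds) auto

end
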